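(* Let $E$ be a finite-dimensional real Euclidean space with translation space $V$, let $\Phi_{\mathrm{aff}}$ be an affine root system on $E$ with a basis $B$ (corresponding to a chamber), and let $J\subset B$ be such that $DJ$ is linearly independent. Let $\Phi'_{\mathrm{aff}}$ be an affine root subsystem of $\Phi_{\mathrm{aff}}$ containing $(\Phi_{\mathrm{aff}})_J$. Then there exists a basis of $\Phi'_{\mathrm{aff}}$ containing $J$.
   Context: Affine root systems are in the sense of Macdonald. For an affine root $a$, $Da\in V^*$ is its gradient: $a(x+v)=a(x)+(Da)(v)$; $DJ=\{Da\mid a\in J\}$. $(\Phi_{\mathrm{aff}})_J=\{a\in\Phi_{\mathrm{aff}}\mid Da\in\mathbb R\cdot DJ\}$. *)

theory Defs
  imports "HOL-Analysis.Analysis"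
begin

text \<open>The affine Euclidean space E is identified with its translation space
  V, modelled by a type 'v of class euclidean_space (choose an origin).  The gradient
  Da \<in> V* is identified with a vector of V via the inner product.\<close>

definition aff_fun :: "('v::euclidean_space \<Rightarrow> real) \<Rightarrow> bool" where
  "aff_fun a \<longleftrightarrow> (\<exists>l c. linear l \<and> a = (\<lambda>x. l x + c))"

text \<open>Gradient: for affine a, a x = grad a \<bullet> x + a 0.\<close>
definition grad :: "('v::euclidean_space \<Rightarrow> real) \<Rightarrow> 'v" where
  "grad a = (\<Sum>b\<in>Basis. (a b - a 0) *\<^sub>R b)"

definition coroot :: "('v::euclidean_space \<Rightarrow> real) \<Rightarrow> 'v" where
  "coroot a = (2 / (grad a \<bullet> grad a)) *\<^sub>R grad a"

definition refl_pt :: "('v::euclidean_space \<Rightarrow> real) \<Rightarrow> 'v \<Rightarrow> 'v" where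
  "refl_pt a x = x - a x *\<^sub>R coroot a"

definition refl_fun :: "('v::euclidean_space \<Rightarrow> real) \<Rightarrow> ('v \<Rightarrow> real) \<Rightarrow> ('v \<Rightarrow> real)" where
  "refl_fun a b = b \<circ> refl_pt a"

inductive_set refl_group :: "('v::euclidean_space \<Rightarrow> real) set \<Rightarrow> ('v \<Rightarrow> 'v) set"
  for S where
    id: "id \<in> refl_group S"
  | step: "w \<in> refl_group S \<Longrightarrow> a \<in> S \<Longrightarrow> refl_pt a \<circ> w \<in> refl_group S"

text \<open>Affine root system in the sense of Macdonald (axioms AR1--AR4).\<close>
definition affine_root_system :: "('v::euclidean_space \<Rightarrow> real) set \<Rightarrow> bool" where
  "affine_root_system S \<longleftrightarrow>
     (\<forall>a\<in>S. aff_fun a \<and> grad a \<noteq> 0) \<and>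
     (\<forall>f. aff_fun f \<longrightarrow> (\<exists>T c. finite T \<and> T \<subseteq> S \<and> f = (\<lambda>x. \<Sum>t\<in>T. c t * t x))) \<and>
     (\<forall>a\<in>S. \<forall>b\<in>S. refl_fun a b \<in> S) \<and>
     (\<forall>a\<in>S. \<forall>b\<in>S. 2 * (grad a \<bullet> grad b) / (grad a \<bullet> grad a) \<in> \<int>) \<and>
     (\<forall>K. compact K \<longrightarrow> finite {w \<in> refl_group S. w ` K \<inter> K \<noteq> {}})"

definition affine_root_subsystem ::
    "('v::euclidean_space \<Rightarrow> real) set \<Rightarrow> ('v \<Rightarrow> real) set \<Rightarrow> bool" where
  "affine_root_subsystem S S' \<longleftrightarrow> S' \<subseteq> S \<and> (\<forall>a\<in>S'. \<forall>b\<in>S'. refl_fun a b \<in> S')"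

definition root_hyp :: "('v::euclidean_space \<Rightarrow> real) \<Rightarrow> 'v set" where
  "root_hyp a = {x. a x = 0}"

definition chamber :: "('v::euclidean_space \<Rightarrow> real) set \<Rightarrow> 'v set \<Rightarrow> bool" where
  "chamber S C \<longleftrightarrow> (\<exists>x. x \<notin> (\<Union>a\<in>S. root_hyp a) \<and>
      C = connected_component_set (- (\<Union>a\<in>S. root_hyp a)) x)"

definition is_wall :: "('v::euclidean_space \<Rightarrow> real) \<Rightarrow> 'v set \<Rightarrow> bool" where
  "is_wall a C \<longleftrightarrow> (\<exists>x e. e > 0 \<and> x \<in> root_hyp a \<and> ball x e \<inter> root_hyp a \<subseteq> closure C)"

definition root_basis :: "('v::euclidean_space \<Rightarrow> real) set \<Rightarrow> ('v \<Rightarrow> real) set \<Rightarrow> bool" where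
  "root_basis S B \<longleftrightarrow> (\<exists>C. chamber S C \<and>
      B = {a \<in> S. (\<forall>x\<in>C. 0 < a x) \<and> is_wall a C \<and> (\<lambda>x. a x / 2) \<notin> S})"

definition roots_J :: "('v::euclidean_space \<Rightarrow> real) set \<Rightarrow> ('v \<Rightarrow> real) set \<Rightarrow> ('v \<Rightarrow> real) set" where
  "roots_J S J = {a \<in> S. grad a \<in> span (grad ` J)}"

end

theory Submission
  imports Defs
begin

text \<open>Let \<open>C\<close> be the chamber defining \<open>B\<close>. As \<open>Phi' \<subseteq> Phi\<close>, the chamber \<open>C'\<close> of \<open>Phi'\<close>
  containing \<open>C\<close> exists. Every \<open>a \<in> J\<close> has \<open>Da \<in> span DJ\<close>, so \<open>a \<in> (Phi)\<^sub>J \<subseteq> Phi'\<close>;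
  being positive on \<open>C\<close> and zero-free on the connected set \<open>C'\<close>, it is positive on \<open>C'\<close>;
  its wall of \<open>C\<close> is a wall of \<open>C'\<close> because \<open>closure C \<subseteq> closure C'\<close>; and \<open>a/2 \<notin> Phi\<close>
  implies \<open>a/2 \<notin> Phi'\<close>. Hence \<open>J\<close> lies in the basis of \<open>Phi'\<close> defined by \<open>C'\<close>.\<close>

lemma aff_fun_continuous_on:
  assumes "aff_fun a"
  shows "continuous_on A a"
proof -
  obtain l c where "linear l" and a: "a = (\<lambda>x. l x + c)"
    using assms unfolding aff_fun_def by blast
  then have "continuous_on A l"
    by (simp add: linear_continuous_on linear_conv_bounded_linear)
  then show ?thesis
    unfolding a by (intro continuous_intros)
qed

lemma connected_nonzero_imp_pos:
  fixes f :: "'a::topological_space \<Rightarrow> real"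
  assumes "continuous_on S f" "connected S" "\<forall>z\<in>S. f z \<noteq> 0"
    and "x \<in> S" "0 < f x" "y \<in> S"
  shows "0 < f y"
proof (rule ccontr)
  assume "\<not> 0 < f y"
  have "is_interval (f ` S)"
    using connected_continuous_image[OF assms(1,2)] by (simp add: is_interval_connected_1)
  then have "0 \<in> f ` S"
    using assms(4-6) \<open>\<not> 0 < f y\<close> unfolding is_interval_1
    by (metis image_eqI less_imp_le not_less)
  then show False
    using assms(3) by auto
qed

lemma chamber_nonempty: "chamber S C \<Longrightarrow> C \<noteq> {}"
  unfolding chamber_def by (metis Compl_iff connected_component_eq_empty)

lemma connected_chamber: "chamber S C \<Longrightarrow> connected C"
  unfolding chamber_def by auto

lemma chamber_root_nonzero: "chamber S C \<Longrightarrow> a \<in> S \<Longrightarrow> y \<in> C \<Longrightarrow> a y \<noteq> 0"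
  unfolding chamber_def root_hyp_def using connected_component_subset by fastforce

lemma chamber_root_pos:
  assumes "chamber S C" "a \<in> S" "aff_fun a" "x \<in> C" "0 < a x" "y \<in> C"
  shows "0 < a y"
  using assms by (metis connected_nonzero_imp_pos aff_fun_continuous_on connected_chamber
      chamber_root_nonzero)

lemma chamber_subset_chamber_of_subset:
  assumes "S' \<subseteq> S" "chamber S C"
  obtains C' where "chamber S' C'" "C \<subseteq> C'"
proof -
  obtain x where x: "x \<notin> (\<Union>a\<in>S. root_hyp a)"
    and C: "C = connected_component_set (- (\<Union>a\<in>S. root_hyp a)) x"
    using assms(2) unfolding chamber_def by blast
  let ?C' = "connected_component_set (- (\<Union>a\<in>S'. root_hyp a)) x"
  have "chamber S' ?C'"
    unfolding chamber_def using x assms(1) by blast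
  moreover have "C \<subseteq> ?C'"
    unfolding C by (rule connected_component_mono) (use assms(1) in blast)
  ultimately show ?thesis
    by (rule that)
qed

lemma is_wall_mono: "C \<subseteq> C' \<Longrightarrow> is_wall a C \<Longrightarrow> is_wall a C'"
  unfolding is_wall_def by (meson closure_mono order_trans)

lemma root_basis_of_subset:
  assumes aff: "\<forall>a\<in>S. aff_fun a" and "root_basis S B" "S' \<subseteq> S" "J \<subseteq> B" "J \<subseteq> S'"
  shows "\<exists>B'. root_basis S' B' \<and> J \<subseteq> B'"
proof -
  obtain C where C: "chamber S C"
    and B: "B = {a \<in> S. (\<forall>x\<in>C. 0 < a x) \<and> is_wall a C \<and> (\<lambda>x. a x / 2) \<notin> S}"
    using assms(2) unfolding root_basis_def by blast
  obtain C' where C': "chamber S' C'" and "C \<subseteq> C'"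
    using chamber_subset_chamber_of_subset[OF assms(3) C] .
  obtain x where "x \<in> C"
    using chamber_nonempty[OF C] by blast
  define B' where "B' = {a \<in> S'. (\<forall>x\<in>C'. 0 < a x) \<and> is_wall a C' \<and> (\<lambda>x. a x / 2) \<notin> S'}"
  have "a \<in> B'" if "a \<in> J" for a
  proof -
    have a: "a \<in> S" "\<forall>x\<in>C. 0 < a x" "is_wall a C" "(\<lambda>x. a x / 2) \<notin> S" "a \<in> S'"
      using that assms(4,5) B by auto
    have "\<forall>y\<in>C'. 0 < a y"
      using chamber_root_pos[OF C' a(5)] aff a(1,2) \<open>x \<in> C\<close> \<open>C \<subseteq> C'\<close> by blast
    moreover have "is_wall a C'"
      using is_wall_mono[OF \<open>C \<subseteq> C'\<close> a(3)] .
    ultimately show ?thesis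
      unfolding B'_def using a(4,5) assms(3) by blast
  qed
  moreover have "root_basis S' B'"
    unfolding root_basis_def B'_def using C' by blast
  ultimately show ?thesis
    by blast
qed

lemma subset_roots_J: "J \<subseteq> S \<Longrightarrow> J \<subseteq> roots_J S J"
  unfolding roots_J_def by (auto intro: span_base)

theorem corollaryA3:
  fixes Phi Phi' B J :: "('v::euclidean_space \<Rightarrow> real) set"
  assumes "affine_root_system Phi"
    and "root_basis Phi B"
    and "J \<subseteq> B"
    and "independent (grad ` J)"
    and "affine_root_subsystem Phi Phi'"
    and "roots_J Phi J \<subseteq> Phi'"
  shows "\<exists>B'. root_basis Phi' B' \<and> J \<subseteq> B'"
proof -
  have "\<forall>a\<in>Phi. aff_fun a"
    using assms(1) unfolding affine_root_system_def by blast
  moreover have "Phi' \<subseteq> Phi"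
    using assms(5) unfolding affine_root_subsystem_def by blast
  moreover have "J \<subseteq> Phi"
    using assms(2,3) unfolding root_basis_def by blast
  then have "J \<subseteq> Phi'"
    using subset_roots_J assms(6) by blast
  ultimately show ?thesis
    using root_basis_of_subset assms(2,3) by blast
qed

end
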